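(* Let $P,Q\in\mathbb{T}^{r\times r}$ such that every column of $P$ and $Q^\top$ has at least one entry distinct from $-\infty$. Suppose that every column of $P$ and $Q^\top$ has a unique maximizing entry. Then there are at most $2^r-1$ tropical Nash equilibria.
   Context: $\mathbb{T}=\mathbb{R}\cup\{-\infty\}$ is the max-plus semifield ($\oplus=\max$, $\odot=+$), and $\Delta^{\mathrm{trop}}_p=\{z\in\mathbb{T}^{p+1}:\bigoplus_k z_k=0\}$. A tropical Nash equilibrium of $(P,Q)$ is a pair $(x^*,y^* )\in\Delta^{\mathrm{trop}}_{r-1}\times\Delta^{\mathrm{trop}}_{r-1}$ such that for all $i$, $x^*_i>-\infty$ implies $(P\odot y^* )_i\geq(P\odot y^* )_k$ for all $k$, and for all $j$, $y^*_j>-\infty$ implies $(Q^\top\odot x^* )_j\geq(Q^\top\odot x^* )_l$ for all $l$. *)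

theory Defs
  imports "HOL-Library.Extended_Real"
begin

text \<open>Max-plus semifield T = R \<union> {-\<infinity>} is modelled inside ereal by excluding \<infinity>.
  Vectors of T^r are functions nat \<Rightarrow> ereal, indices 0..r-1, padded with -\<infinity> outside.
  Matrices of T^(r x r) are functions nat \<Rightarrow> nat \<Rightarrow> ereal (row, column).
  The tropical sum over a finite index set is Sup (empty sum = -\<infinity>).\<close>

definition trop_simplex :: "nat \<Rightarrow> (nat \<Rightarrow> ereal) set" where
  "trop_simplex r = {z. (\<forall>k. r \<le> k \<longrightarrow> z k = -\<infinity>) \<and> (\<forall>k<r. z k \<noteq> \<infinity>)
                        \<and> (SUP k\<in>{..<r}. z k) = 0}"

definition trop_mv :: "nat \<Rightarrow> (nat \<Rightarrow> nat \<Rightarrow> ereal) \<Rightarrow> (nat \<Rightarrow> ereal) \<Rightarrow> nat \<Rightarrow> ereal" where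
  "trop_mv r P y i = (SUP k\<in>{..<r}. P i k + y k)"

definition trop_transpose :: "(nat \<Rightarrow> nat \<Rightarrow> ereal) \<Rightarrow> nat \<Rightarrow> nat \<Rightarrow> ereal" where
  "trop_transpose Q i j = Q j i"

definition trop_nash :: "nat \<Rightarrow> (nat \<Rightarrow> nat \<Rightarrow> ereal) \<Rightarrow> (nat \<Rightarrow> nat \<Rightarrow> ereal)
    \<Rightarrow> (nat \<Rightarrow> ereal) \<Rightarrow> (nat \<Rightarrow> ereal) \<Rightarrow> bool" where
  "trop_nash r P Q x y \<longleftrightarrow> x \<in> trop_simplex r \<and> y \<in> trop_simplex r
     \<and> (\<forall>i<r. x i > -\<infinity> \<longrightarrow> (\<forall>k<r. trop_mv r P y i \<ge> trop_mv r P y k))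
     \<and> (\<forall>j<r. y j > -\<infinity> \<longrightarrow>
          (\<forall>l<r. trop_mv r (trop_transpose Q) x j \<ge> trop_mv r (trop_transpose Q) x l))"

definition trop_matrix :: "nat \<Rightarrow> (nat \<Rightarrow> nat \<Rightarrow> ereal) \<Rightarrow> bool" where
  "trop_matrix r M \<longleftrightarrow> (\<forall>i<r. \<forall>j<r. M i j \<noteq> \<infinity>)"

definition cols_nonbot :: "nat \<Rightarrow> (nat \<Rightarrow> nat \<Rightarrow> ereal) \<Rightarrow> bool" where
  "cols_nonbot r M \<longleftrightarrow> (\<forall>j<r. \<exists>i<r. M i j \<noteq> -\<infinity>)"

definition cols_unique_max :: "nat \<Rightarrow> (nat \<Rightarrow> nat \<Rightarrow> ereal) \<Rightarrow> bool" where
  "cols_unique_max r M \<longleftrightarrow> (\<forall>j<r. \<exists>!i. i < r \<and> (\<forall>k<r. M k j \<le> M i j))"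

end

theory Submission
  imports Defs
begin

text \<open>Let \<sigma>(j) be the unique maximizing row of column j of P and c_j its value. The largest
  entry of P \<odot> y is max_j (c_j + y_j), and every row attaining it is \<sigma>(j) for some j in the
  support of y attaining max_j (c_j + y_j). At an equilibrium this bounds |supp x| by the number
  of such j, hence by |supp y|, and symmetrically with Q; so all these sets have equal size:
  the whole support of y attains the maximum and supp y = \<sigma>_Q(supp x). Then y_j = m - c_j on
  supp y, with m fixed by max_j y_j = 0, and likewise for x. So an equilibrium is determined
  by the support of x, a nonempty subset of {0, \<dots>, r - 1}.\<close>

lemma finite_SUP_attained:
  fixes f :: "'a \<Rightarrow> 'b::complete_linorder"
  assumes "finite I" "I \<noteq> {}"
  obtains i where "i \<in> I" "(SUP i\<in>I. f i) = f i"
  using Max_in[of "f ` I"] Max_Sup[of "f ` I"] assms by auto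

lemma subset_image_cycle_eq:
  assumes "finite X" "finite Y"
    and "X \<subseteq> f ` B" "B \<subseteq> Y" "Y \<subseteq> g ` C" "C \<subseteq> X"
  shows "B = Y" "C = X" "Y = g ` X"
proof -
  have B: "finite B" and C: "finite C"
    using assms finite_subset by auto
  have cards: "card X \<le> card B" "card B \<le> card Y" "card Y \<le> card C" "card C \<le> card X"
    using card_mono[OF finite_imageI[OF B] \<open>X \<subseteq> f ` B\<close>] card_image_le[OF B, of f]
      card_mono[OF finite_imageI[OF C] \<open>Y \<subseteq> g ` C\<close>] card_image_le[OF C, of g]
      card_mono[OF \<open>finite Y\<close> \<open>B \<subseteq> Y\<close>] card_mono[OF \<open>finite X\<close> \<open>C \<subseteq> X\<close>]
    by linarith+
  show "B = Y"
    using card_subset_eq[OF \<open>finite Y\<close> \<open>B \<subseteq> Y\<close>] cards by linarith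
  show "C = X"
    using card_subset_eq[OF \<open>finite X\<close> \<open>C \<subseteq> X\<close>] cards by linarith
  have "card (g ` C) \<le> card Y"
    using card_image_le[OF C, of g] cards by linarith
  then show "Y = g ` X"
    using card_seteq[OF finite_imageI[OF C] \<open>Y \<subseteq> g ` C\<close>] \<open>C = X\<close> by simp
qed

lemma trop_simplexD:
  assumes "y \<in> trop_simplex r"
  shows "\<And>k. k < r \<Longrightarrow> y k \<le> 0" "\<exists>k<r. y k = 0"
    "\<And>k. r \<le> k \<Longrightarrow> y k = -\<infinity>" "\<And>k. k < r \<Longrightarrow> y k \<noteq> \<infinity>"
proof -
  have sup: "(SUP k\<in>{..<r}. y k) = 0"
    using assms unfolding trop_simplex_def by auto
  then show "\<And>k. k < r \<Longrightarrow> y k \<le> 0"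
    by (metis SUP_upper lessThan_iff)
  have "{..<r} \<noteq> {}"
    using sup by (auto simp: bot_ereal_def)
  then show "\<exists>k<r. y k = 0"
    using sup by (metis finite_SUP_attained finite_lessThan lessThan_iff)
  show "\<And>k. r \<le> k \<Longrightarrow> y k = -\<infinity>" "\<And>k. k < r \<Longrightarrow> y k \<noteq> \<infinity>"
    using assms unfolding trop_simplex_def by auto
qed

lemma trop_matrix_transpose: "trop_matrix r M \<Longrightarrow> trop_matrix r (trop_transpose M)"
  unfolding trop_matrix_def trop_transpose_def by auto

definition col_argmax :: "nat \<Rightarrow> (nat \<Rightarrow> nat \<Rightarrow> ereal) \<Rightarrow> nat \<Rightarrow> nat" where
  "col_argmax r A j = (THE i. i < r \<and> (\<forall>k<r. A k j \<le> A i j))"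

definition col_max :: "nat \<Rightarrow> (nat \<Rightarrow> nat \<Rightarrow> ereal) \<Rightarrow> nat \<Rightarrow> ereal" where
  "col_max r A j = A (col_argmax r A j) j"

definition trop_supp :: "nat \<Rightarrow> (nat \<Rightarrow> ereal) \<Rightarrow> nat set" where
  "trop_supp r x = {i. i < r \<and> x i \<noteq> -\<infinity>}"

definition max_cols :: "nat \<Rightarrow> (nat \<Rightarrow> nat \<Rightarrow> ereal) \<Rightarrow> (nat \<Rightarrow> ereal) \<Rightarrow> nat set" where
  "max_cols r A y =
     {j \<in> trop_supp r y. \<forall>j'<r. col_max r A j' + y j' \<le> col_max r A j + y j}"

lemma trop_supp_subset: "trop_supp r x \<subseteq> {..<r}"
  unfolding trop_supp_def by auto

lemma trop_supp_nonempty: "x \<in> trop_simplex r \<Longrightarrow> trop_supp r x \<noteq> {}"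
  using trop_simplexD(2) unfolding trop_supp_def by fastforce

lemma col_argmax:
  assumes "cols_unique_max r A" "j < r"
  shows col_argmax_less: "col_argmax r A j < r"
    and col_le_col_max: "\<And>k. k < r \<Longrightarrow> A k j \<le> col_max r A j"
    and col_argmax_eqI: "\<And>i. i < r \<Longrightarrow> A i j = col_max r A j \<Longrightarrow> i = col_argmax r A j"
proof -
  have ex1: "\<exists>!i. i < r \<and> (\<forall>k<r. A k j \<le> A i j)"
    using assms unfolding cols_unique_max_def by auto
  then have max: "col_argmax r A j < r \<and> (\<forall>k<r. A k j \<le> col_max r A j)"
    unfolding col_argmax_def col_max_def by (rule theI')
  then show "col_argmax r A j < r" "\<And>k. k < r \<Longrightarrow> A k j \<le> col_max r A j"
    by auto
  show "\<And>i. i < r \<Longrightarrow> A i j = col_max r A j \<Longrightarrow> i = col_argmax r A j"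
    using ex1 max by (metis col_max_def)
qed

lemma col_max_finite:
  assumes "trop_matrix r A" "cols_nonbot r A" "cols_unique_max r A" "j < r"
  shows "col_max r A j \<noteq> -\<infinity>" "col_max r A j \<noteq> \<infinity>"
proof -
  obtain i where "i < r" "A i j \<noteq> -\<infinity>"
    using assms(2,4) unfolding cols_nonbot_def by auto
  then show "col_max r A j \<noteq> -\<infinity>"
    using col_le_col_max[OF assms(3,4)] by (metis ereal_infty_less_eq(2))
  show "col_max r A j \<noteq> \<infinity>"
    using assms(1,4) col_argmax_less[OF assms(3,4)] unfolding trop_matrix_def col_max_def by auto
qed

lemma best_reply_in_col_argmax_image:
  assumes A: "trop_matrix r A" "cols_nonbot r A" "cols_unique_max r A"
    and y: "y \<in> trop_simplex r" and i: "i < r"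
    and best: "\<And>k. k < r \<Longrightarrow> trop_mv r A y k \<le> trop_mv r A y i"
  shows "i \<in> col_argmax r A ` max_cols r A y"
proof -
  obtain j where j: "j < r" "trop_mv r A y i = A i j + y j"
    using finite_SUP_attained[of "{..<r}" "\<lambda>k. A i k + y k"] i unfolding trop_mv_def by auto
  have dominated: "col_max r A j' + y j' \<le> A i j + y j" if "j' < r" for j'
  proof -
    have "col_max r A j' + y j' \<le> trop_mv r A y (col_argmax r A j')"
      unfolding col_max_def trop_mv_def using that by (intro SUP_upper) auto
    also have "\<dots> \<le> trop_mv r A y i"
      using best col_argmax_less[OF A(3) that] by auto
    finally show ?thesis
      using j by simp
  qed
  obtain j0 where j0: "j0 < r" "y j0 = 0"
    using trop_simplexD(2)[OF y] by auto
  have "col_max r A j0 + y j0 \<noteq> -\<infinity>"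
    using col_max_finite[OF A j0(1)] j0(2) by auto
  then have "A i j + y j \<noteq> -\<infinity>"
    using dominated[OF j0(1)] by (metis ereal_infty_less_eq(2))
  then have yj: "y j \<noteq> -\<infinity>" "y j \<noteq> \<infinity>"
    using trop_simplexD(4)[OF y j(1)] A(1) i j(1) unfolding trop_matrix_def by auto
  then have "col_max r A j \<le> A i j"
    using dominated[OF j(1)] by (simp add: ereal_add_le_add_iff2)
  then have max: "A i j = col_max r A j"
    using col_le_col_max[OF A(3) j(1) i] by auto
  then have "j \<in> max_cols r A y"
    unfolding max_cols_def trop_supp_def using j(1) yj dominated by auto
  then show ?thesis
    using col_argmax_eqI[OF A(3) j(1) i max] by auto
qed

lemma trop_nash_supports:
  assumes "trop_matrix r P" and "trop_matrix r Q"
    and "cols_nonbot r P" and "cols_nonbot r (trop_transpose Q)"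
    and "cols_unique_max r P" and "cols_unique_max r (trop_transpose Q)"
    and nash: "trop_nash r P Q x y"
  shows "max_cols r P y = trop_supp r y" "max_cols r (trop_transpose Q) x = trop_supp r x"
    "trop_supp r y = col_argmax r (trop_transpose Q) ` trop_supp r x"
proof -
  have x: "x \<in> trop_simplex r" and y: "y \<in> trop_simplex r"
    using nash unfolding trop_nash_def by auto
  have x_replies: "trop_supp r x \<subseteq> col_argmax r P ` max_cols r P y"
    using nash best_reply_in_col_argmax_image[OF assms(1,3,5) y]
    unfolding trop_nash_def trop_supp_def by auto
  have y_replies:
    "trop_supp r y \<subseteq> col_argmax r (trop_transpose Q) ` max_cols r (trop_transpose Q) x"
    using nash best_reply_in_col_argmax_image[OF trop_matrix_transpose[OF assms(2)] assms(4,6) x]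
    unfolding trop_nash_def trop_supp_def by auto
  have finite: "finite (trop_supp r z)" for z
    using finite_subset[OF trop_supp_subset] by auto
  have max_cols_subset: "max_cols r A z \<subseteq> trop_supp r z" for A z
    unfolding max_cols_def by auto
  show "max_cols r P y = trop_supp r y" "max_cols r (trop_transpose Q) x = trop_supp r x"
    "trop_supp r y = col_argmax r (trop_transpose Q) ` trop_supp r x"
    using subset_image_cycle_eq[OF finite finite x_replies max_cols_subset y_replies max_cols_subset]
    by auto
qed

text \<open>Compare y and y' at a column j with y'_j = 0: it lies in the common support, so in
  both sets of maximizing columns.\<close>

lemma trop_simplex_le_if_max_cols_eq_supp:
  assumes A: "trop_matrix r A" "cols_nonbot r A" "cols_unique_max r A"
    and y: "y \<in> trop_simplex r" and y': "y' \<in> trop_simplex r"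
    and supp: "trop_supp r y = trop_supp r y'"
    and max: "max_cols r A y = trop_supp r y" and max': "max_cols r A y' = trop_supp r y'"
  shows "y k \<le> y' k"
proof (cases "k \<in> trop_supp r y")
  case False
  then show ?thesis
    using trop_simplexD(3)[OF y] unfolding trop_supp_def by (cases "k < r") auto
next
  case True
  obtain j where j: "j < r" "y' j = 0"
    using trop_simplexD(2)[OF y'] by auto
  then have "j \<in> max_cols r A y"
    using max supp unfolding trop_supp_def by auto
  moreover have "k \<in> max_cols r A y'" "k < r"
    using True max' supp unfolding trop_supp_def by auto
  ultimately have "col_max r A k + y k \<le> col_max r A j + y j"
    "col_max r A j + y' j \<le> col_max r A k + y' k"
    unfolding max_cols_def using True j(1) by auto
  moreover have "y j \<le> y' j"
    using trop_simplexD(1)[OF y j(1)] j(2) by simp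
  ultimately have "col_max r A k + y k \<le> col_max r A k + y' k"
    by (meson add_left_mono order.trans)
  then show ?thesis
    using col_max_finite[OF A \<open>k < r\<close>] by (simp add: ereal_add_le_add_iff)
qed

lemma trop_simplex_eq_if_max_cols_eq_supp:
  assumes "trop_matrix r A" "cols_nonbot r A" "cols_unique_max r A"
    and "y \<in> trop_simplex r" "y' \<in> trop_simplex r"
    and "trop_supp r y = trop_supp r y'"
    and "max_cols r A y = trop_supp r y" "max_cols r A y' = trop_supp r y'"
  shows "y = y'"
proof
  fix k
  show "y k = y' k"
    using trop_simplex_le_if_max_cols_eq_supp[OF assms, of k]
      trop_simplex_le_if_max_cols_eq_supp[OF assms(1-3,5,4) assms(6)[symmetric] assms(8,7), of k]
    by (rule antisym)
qed

lemma trop_nash_eq_if_supp_eq: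
  assumes "trop_matrix r P" and "trop_matrix r Q"
    and "cols_nonbot r P" and "cols_nonbot r (trop_transpose Q)"
    and "cols_unique_max r P" and "cols_unique_max r (trop_transpose Q)"
    and nash: "trop_nash r P Q x y" and nash': "trop_nash r P Q x' y'"
    and supp: "trop_supp r x = trop_supp r x'"
  shows "x = x' \<and> y = y'"
proof -
  have simplex: "x \<in> trop_simplex r" "y \<in> trop_simplex r" "x' \<in> trop_simplex r" "y' \<in> trop_simplex r"
    using nash nash' unfolding trop_nash_def by auto
  note supports = trop_nash_supports[OF assms(1-6) nash]
    and supports' = trop_nash_supports[OF assms(1-6) nash']
  have "x = x'"
    using trop_simplex_eq_if_max_cols_eq_supp[OF trop_matrix_transpose[OF assms(2)] assms(4,6)
        simplex(1,3) supp supports(2) supports'(2)] .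
  moreover have "trop_supp r y = trop_supp r y'"
    using supports(3) supports'(3) supp by simp
  then have "y = y'"
    using trop_simplex_eq_if_max_cols_eq_supp[OF assms(1,3,5) simplex(2,4) _ supports(1) supports'(1)]
    by simp
  ultimately show ?thesis ..
qed

theorem proposition6p2:
  fixes r :: nat and P Q :: "nat \<Rightarrow> nat \<Rightarrow> ereal"
  assumes "trop_matrix r P" and "trop_matrix r Q"
    and "cols_nonbot r P" and "cols_nonbot r (trop_transpose Q)"
    and "cols_unique_max r P" and "cols_unique_max r (trop_transpose Q)"
  shows "finite {(x, y). trop_nash r P Q x y}
         \<and> card {(x, y). trop_nash r P Q x y} \<le> 2 ^ r - 1"
proof -
  let ?E = "{(x, y). trop_nash r P Q x y}" and ?supp_x = "\<lambda>(x, y). trop_supp r x"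
  have inj: "inj_on ?supp_x ?E"
  proof (rule inj_onI, clarify)
    fix x y x' y'
    assume "trop_nash r P Q x y" "trop_nash r P Q x' y'" "trop_supp r x = trop_supp r x'"
    then show "x = x' \<and> y = y'"
      by (rule trop_nash_eq_if_supp_eq[OF assms])
  qed
  have into: "?supp_x ` ?E \<subseteq> Pow {..<r} - {{}}"
    using trop_supp_subset trop_supp_nonempty unfolding trop_nash_def by auto
  have finite: "finite (Pow {..<r} - {{}})" and card: "card (Pow {..<r} - {{}}) = 2 ^ r - 1"
    by (auto simp: card_Diff_subset card_Pow)
  show ?thesis
    using finite_imageD[OF finite_subset[OF into finite] inj] card_inj_on_le[OF inj into finite] card
    by simp
qed

end
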